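(* Let $(\mathcal{X},\tau,\mathcal{F})$ be either (a) the inverse image of a locally measurable vector space $(\mathcal{X}_1,\tau_1,\mathcal{F}_1)$ under a linear map $f_1\colon\mathcal{X}\to\mathcal{X}_1$ (in which case set $I=\{1\}$), or (b) the projective limit of a projective system of locally measurable vector spaces $(\mathcal{X}_i,\tau_i,\mathcal{F}_i,f_{i,j})_{i\le j}$ indexed by a directed preordered set $(I,\le)$, with canonical projections $f_i\colon\mathcal{X}\to\mathcal{X}_i$. For each $i\in I$ and $x_i\in\mathcal{X}_i$ let $\mathcal{V}_{i,x_i}$ be a local basis of neighborhoods of $x_i$ in $(\mathcal{X}_i,\tau_i)$ consisting of $\mathcal{F}_i$-measurable sets. Then for every $x\in\mathcal{X}$, the set $\mathcal{V}_x:=\{f_i^{-1}(V_i) : i\in I,\ V_i\in\mathcal{V}_{i,f_i(x)}\}$ is a local basis of neighborhoods of $x$ in $(\mathcal{X},\tau)$. In particular, every point of $\mathcal{X}$ admits a local basis of neighborhoods consisting of $\mathcal{F}$-measurable sets.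
   Context: A locally measurable vector space is a triple $(\mathcal{Y},\sigma,\mathcal{G})$ with $\mathcal{Y}$ a real vector space, $\sigma$ a (not necessarily Hausdorff) vector space topology, $\mathcal{G}$ a $\sigma$-algebra, such that every point admits a local basis of neighborhoods belonging to $\mathcal{G}$ and every continuous linear functional is $\mathcal{G}$-measurable. Inverse image: $\tau$ and $\mathcal{F}$ are the initial topology and initial $\sigma$-algebra on the vector space $\mathcal{X}$ with respect to $f_1$. Projective system: $(I,\le)$ directed preordered set, $f_{i,j}\colon\mathcal{X}_j\to\mathcal{X}_i$ for $i\le j$ measurable, continuous and linear, $f_{i,i}=\mathrm{id}$, $f_{i,k}=f_{i,j}\circ f_{j,k}$ for $i\le j\le k$; the projective limit is $\mathcal{X}=\{(x_i)\in\prod_i\mathcal{X}_i: x_i=f_{i,j}(x_j)\ \forall i\le j\}$ with $f_i$ the coordinate projections, and $\tau$, $\mathcal{F}$ the initial topology and initial $\sigma$-algebra with respect to $(f_i)_{i\in I}$. *)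

theory Defs
  imports "HOL-Analysis.Analysis"
begin

text \<open>Real vector spaces are represented as linear subspaces Y of an ambient real vector
  space type (possibly the whole type, Y = UNIV).\<close>

definition linear_on :: "'a::real_vector set \<Rightarrow> ('a \<Rightarrow> 'b::real_vector) \<Rightarrow> bool" where
  "linear_on Y \<phi> \<longleftrightarrow>
     (\<forall>x\<in>Y. \<forall>y\<in>Y. \<phi> (x + y) = \<phi> x + \<phi> y) \<and> (\<forall>c. \<forall>x\<in>Y. \<phi> (c *\<^sub>R x) = c *\<^sub>R \<phi> x)"

definition vector_space_topology :: "'a::real_vector set \<Rightarrow> 'a topology \<Rightarrow> bool" where
  "vector_space_topology Y T \<longleftrightarrow>
     subspace Y \<and> topspace T = Y \<and>
     continuous_map (prod_topology T T) T (\<lambda>(x, y). x + y) \<and>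
     continuous_map (prod_topology euclideanreal T) T (\<lambda>(c, x). c *\<^sub>R x)"

definition is_nbhd :: "'a topology \<Rightarrow> 'a \<Rightarrow> 'a set \<Rightarrow> bool" where
  "is_nbhd T x N \<longleftrightarrow> N \<subseteq> topspace T \<and> (\<exists>U. openin T U \<and> x \<in> U \<and> U \<subseteq> N)"

definition local_basis :: "'a topology \<Rightarrow> 'a \<Rightarrow> 'a set set \<Rightarrow> bool" where
  "local_basis T x \<V> \<longleftrightarrow>
     (\<forall>V\<in>\<V>. is_nbhd T x V) \<and> (\<forall>N. is_nbhd T x N \<longrightarrow> (\<exists>V\<in>\<V>. V \<subseteq> N))"

definition locally_measurable_vs :: "'a::real_vector set \<Rightarrow> 'a topology \<Rightarrow> 'a set set \<Rightarrow> bool" where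
  "locally_measurable_vs Y T G \<longleftrightarrow>
     vector_space_topology Y T \<and> sigma_algebra Y G \<and>
     (\<forall>x\<in>Y. \<exists>\<V>. local_basis T x \<V> \<and> \<V> \<subseteq> G) \<and>
     (\<forall>\<phi>::'a \<Rightarrow> real. linear_on Y \<phi> \<and> continuous_map T euclideanreal \<phi> \<longrightarrow>
        (\<forall>B\<in>sets borel. \<phi> -` B \<inter> Y \<in> G))"

definition initial_topology :: "'x set \<Rightarrow> 'i set \<Rightarrow> ('i \<Rightarrow> 'x \<Rightarrow> 'y) \<Rightarrow> ('i \<Rightarrow> 'y topology) \<Rightarrow> 'x topology" where
  "initial_topology X I f T =
     topology_generated_by (insert X {f i -` U \<inter> X | i U. i \<in> I \<and> openin (T i) U})"

definition initial_sigma :: "'x set \<Rightarrow> 'i set \<Rightarrow> ('i \<Rightarrow> 'x \<Rightarrow> 'y) \<Rightarrow> ('i \<Rightarrow> 'y set set) \<Rightarrow> 'x set set" where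
  "initial_sigma X I f G = sigma_sets X {f i -` A \<inter> X | i A. i \<in> I \<and> A \<in> G i}"

definition directed_preorder :: "'i set \<Rightarrow> ('i \<Rightarrow> 'i \<Rightarrow> bool) \<Rightarrow> bool" where
  "directed_preorder I le \<longleftrightarrow> I \<noteq> {} \<and> (\<forall>i\<in>I. le i i) \<and>
     (\<forall>i\<in>I. \<forall>j\<in>I. \<forall>k\<in>I. le i j \<and> le j k \<longrightarrow> le i k) \<and>
     (\<forall>i\<in>I. \<forall>j\<in>I. \<exists>k\<in>I. le i k \<and> le j k)"

definition projective_system ::
  "'i set \<Rightarrow> ('i \<Rightarrow> 'i \<Rightarrow> bool) \<Rightarrow> ('i \<Rightarrow> 'b::real_vector set) \<Rightarrow> ('i \<Rightarrow> 'b topology)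
   \<Rightarrow> ('i \<Rightarrow> 'b set set) \<Rightarrow> ('i \<Rightarrow> 'i \<Rightarrow> 'b \<Rightarrow> 'b) \<Rightarrow> bool" where
  "projective_system I le Xs T G f \<longleftrightarrow>
     directed_preorder I le \<and>
     (\<forall>i\<in>I. locally_measurable_vs (Xs i) (T i) (G i)) \<and>
     (\<forall>i\<in>I. \<forall>j\<in>I. le i j \<longrightarrow>
        f i j ` Xs j \<subseteq> Xs i \<and> linear_on (Xs j) (f i j) \<and>
        continuous_map (T j) (T i) (f i j) \<and>
        (\<forall>A\<in>G i. f i j -` A \<inter> Xs j \<in> G j)) \<and>
     (\<forall>i\<in>I. \<forall>x\<in>Xs i. f i i x = x) \<and>
     (\<forall>i\<in>I. \<forall>j\<in>I. \<forall>k\<in>I. le i j \<and> le j k \<longrightarrow> (\<forall>x\<in>Xs k. f i k x = f i j (f j k x)))"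

definition proj_limit ::
  "'i set \<Rightarrow> ('i \<Rightarrow> 'i \<Rightarrow> bool) \<Rightarrow> ('i \<Rightarrow> 'b set) \<Rightarrow> ('i \<Rightarrow> 'i \<Rightarrow> 'b \<Rightarrow> 'b) \<Rightarrow> ('i \<Rightarrow> 'b) set" where
  "proj_limit I le Xs f = {x \<in> PiE I Xs. \<forall>i\<in>I. \<forall>j\<in>I. le i j \<longrightarrow> x i = f i j (x j)}"

end

theory Submission
  imports Defs
begin

text \<open>
  A cylinder \<open>f\<^sub>i\<^sup>-\<^sup>1(U)\<close> with \<open>U\<close> open is open in the initial topology, so preimages of
  neighbourhoods of \<open>f\<^sub>i(x)\<close> are neighbourhoods of \<open>x\<close>. Conversely, since \<open>I\<close> is directed and
  every \<open>f\<^sub>i\<close> factors continuously through \<open>f\<^sub>k\<close> for \<open>i \<le> k\<close>, the intersection of two cylinders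
  around \<open>x\<close> contains a single cylinder around \<open>x\<close>; hence every open neighbourhood of \<open>x\<close> contains a
  cylinder \<open>f\<^sub>k\<^sup>-\<^sup>1(W)\<close>, and \<open>W\<close> contains a member \<open>V\<close> of the given local basis at \<open>f\<^sub>k(x)\<close>.
  The sets \<open>f\<^sub>k\<^sup>-\<^sup>1(V)\<close> are generators of the initial \<open>\<sigma>\<close>-algebra, hence measurable.
  The inverse image is the case of a single map.
\<close>

lemma local_basis_of_cylinders:
  fixes p :: "'i \<Rightarrow> 'x \<Rightarrow> 'y"
  assumes topspace: "topspace \<tau> = X" and "x \<in> X"
    and open_cylinder: "\<And>i U. i \<in> I \<Longrightarrow> openin (T i) U \<Longrightarrow> openin \<tau> (p i -` U \<inter> X)"
    and cylinder_inside: "\<And>S. openin \<tau> S \<Longrightarrow> x \<in> S \<Longrightarrow>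
           \<exists>i\<in>I. \<exists>U. openin (T i) U \<and> p i x \<in> U \<and> p i -` U \<inter> X \<subseteq> S"
    and basis: "\<And>i. i \<in> I \<Longrightarrow> local_basis (T i) (p i x) (\<V> i)"
  shows "local_basis \<tau> x {p i -` V \<inter> X | i V. i \<in> I \<and> V \<in> \<V> i}"
  unfolding local_basis_def
proof (intro conjI ballI allI impI)
  fix W assume "W \<in> {p i -` V \<inter> X | i V. i \<in> I \<and> V \<in> \<V> i}"
  then obtain i V where i: "i \<in> I" and V: "V \<in> \<V> i" and W: "W = p i -` V \<inter> X"
    by blast
  have "is_nbhd (T i) (p i x) V"
    using basis[OF i] V unfolding local_basis_def by blast
  then obtain U where U: "openin (T i) U" "p i x \<in> U" "U \<subseteq> V"
    unfolding is_nbhd_def by blast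
  have "openin \<tau> (p i -` U \<inter> X)" "x \<in> p i -` U \<inter> X" "p i -` U \<inter> X \<subseteq> W"
    using open_cylinder[OF i U(1)] U(2,3) \<open>x \<in> X\<close> W by auto
  then show "is_nbhd \<tau> x W"
    unfolding is_nbhd_def topspace W by blast
next
  fix N assume "is_nbhd \<tau> x N"
  then obtain S where S: "openin \<tau> S" "x \<in> S" "S \<subseteq> N"
    unfolding is_nbhd_def by blast
  then obtain i U where i: "i \<in> I" and U: "openin (T i) U" "p i x \<in> U" "p i -` U \<inter> X \<subseteq> S"
    using cylinder_inside by blast
  have "is_nbhd (T i) (p i x) U"
    unfolding is_nbhd_def using U(1,2) openin_subset by blast
  then obtain V where "V \<in> \<V> i" "V \<subseteq> U"
    using basis[OF i] unfolding local_basis_def by blast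
  then have "p i -` V \<inter> X \<in> {p i -` V \<inter> X | i V. i \<in> I \<and> V \<in> \<V> i}" "p i -` V \<inter> X \<subseteq> N"
    using i U(3) S(3) by blast+
  then show "\<exists>W\<in>{p i -` V \<inter> X | i V. i \<in> I \<and> V \<in> \<V> i}. W \<subseteq> N"
    by blast
qed

lemma topspace_initial_topology: "topspace (initial_topology X I p T) = X"
  unfolding initial_topology_def topology_generated_by_topspace by auto

lemma openin_initial_topology_cylinder:
  assumes "i \<in> I" "openin (T i) U"
  shows "openin (initial_topology X I p T) (p i -` U \<inter> X)"
  unfolding initial_topology_def using assms by (intro topology_generated_by_Basis) blast

lemma initial_topology_directed_cylinder_inside:
  assumes "I \<noteq> {}"
    and into_topspace: "\<And>i x. i \<in> I \<Longrightarrow> x \<in> X \<Longrightarrow> p i x \<in> topspace (T i)"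
    and directed: "\<And>i j. i \<in> I \<Longrightarrow> j \<in> I \<Longrightarrow> \<exists>k\<in>I. \<exists>g h.
           continuous_map (T k) (T i) g \<and> continuous_map (T k) (T j) h \<and>
           (\<forall>x\<in>X. p i x = g (p k x) \<and> p j x = h (p k x))"
    and "openin (initial_topology X I p T) S" "x \<in> X" "x \<in> S"
  shows "\<exists>k\<in>I. \<exists>W. openin (T k) W \<and> p k x \<in> W \<and> p k -` W \<inter> X \<subseteq> S"
proof -
  have "generate_topology_on (insert X {p i -` U \<inter> X | i U. i \<in> I \<and> openin (T i) U}) S"
    using assms(4) unfolding initial_topology_def by (rule openin_topology_generated_by)
  then show ?thesis
    using \<open>x \<in> X\<close> \<open>x \<in> S\<close>
  proof (induction arbitrary: x rule: generate_topology_on.induct)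
    case Empty
    then show ?case by simp
  next
    case (Int A B)
    obtain i W1 where A: "i \<in> I" "openin (T i) W1" "p i x \<in> W1" "p i -` W1 \<inter> X \<subseteq> A"
      using Int by blast
    obtain j W2 where B: "j \<in> I" "openin (T j) W2" "p j x \<in> W2" "p j -` W2 \<inter> X \<subseteq> B"
      using Int by blast
    obtain k g h where k: "k \<in> I" and g: "continuous_map (T k) (T i) g"
      and h: "continuous_map (T k) (T j) h"
      and factor: "\<And>y. y \<in> X \<Longrightarrow> p i y = g (p k y) \<and> p j y = h (p k y)"
      using directed[OF A(1) B(1)] by blast
    define W where "W = {y \<in> topspace (T k). g y \<in> W1} \<inter> {y \<in> topspace (T k). h y \<in> W2}"
    have "openin (T k) W"
      unfolding W_def
      using openin_continuous_map_preimage[OF g A(2)] openin_continuous_map_preimage[OF h B(2)]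
      by blast
    moreover have "p k x \<in> W"
      unfolding W_def using into_topspace[OF k Int.prems(1)] factor[OF Int.prems(1)] A(3) B(3)
      by simp
    moreover have "p k -` W \<inter> X \<subseteq> A \<inter> B"
    proof
      fix y assume y: "y \<in> p k -` W \<inter> X"
      then have "p i y \<in> W1" "p j y \<in> W2"
        using factor[of y] unfolding W_def by auto
      then show "y \<in> A \<inter> B" using A(4) B(4) y by blast
    qed
    ultimately show ?case using k by blast
  next
    case (UN K)
    then obtain A where "A \<in> K" "x \<in> A" by blast
    with UN.IH[OF \<open>A \<in> K\<close> UN.prems(1) \<open>x \<in> A\<close>] show ?case by blast
  next
    case (Basis S)
    consider "S = X" | i U where "i \<in> I" "openin (T i) U" "S = p i -` U \<inter> X"
      using Basis.hyps by blast
    then show ?case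
    proof cases
      case 1
      obtain i where "i \<in> I" using \<open>I \<noteq> {}\<close> by blast
      then show ?thesis
        using 1 into_topspace[OF \<open>i \<in> I\<close> Basis.prems(1)]
        by (intro bexI[of _ i] exI[of _ "topspace (T i)"]) auto
    next
      case 2
      then show ?thesis using Basis.prems by blast
    qed
  qed
qed

lemma proj_limit_component:
  "x \<in> proj_limit I le Xs f \<Longrightarrow> i \<in> I \<Longrightarrow> x i \<in> Xs i"
  unfolding proj_limit_def by (auto simp: PiE_iff)

lemma local_basis_pullback:
  assumes "topspace T = UNIV" "local_basis T (f x) \<V>"
  shows "local_basis (pullback_topology UNIV f T) x {f -` V | V. V \<in> \<V>}"
proof -
  have "local_basis (pullback_topology UNIV f T) x
          {(\<lambda>_. f) i -` V \<inter> UNIV | i V. i \<in> (UNIV :: unit set) \<and> V \<in> (\<lambda>_. \<V>) i}"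
  proof (rule local_basis_of_cylinders
      [where T = "\<lambda>_. T" and p = "\<lambda>_. f" and \<V> = "\<lambda>_. \<V>" and I = UNIV and X = UNIV])
    show "topspace (pullback_topology UNIV f T) = UNIV"
      using assms(1) by (simp add: topspace_pullback_topology)
  next
    fix S assume "openin (pullback_topology UNIV f T) S" "x \<in> S"
    then show "\<exists>i\<in>UNIV. \<exists>U. openin T U \<and> f x \<in> U \<and> f -` U \<inter> UNIV \<subseteq> S"
      by (auto simp: openin_pullback_topology)
  next
    fix i :: unit and U assume "openin T U"
    then show "openin (pullback_topology UNIV f T) (f -` U \<inter> UNIV)"
      unfolding openin_pullback_topology by blast
  next
    show "local_basis T (f x) \<V>" by (fact assms(2))
  qed simp
  moreover have "{(\<lambda>_. f) i -` V \<inter> UNIV | i V. i \<in> (UNIV :: unit set) \<and> V \<in> (\<lambda>_. \<V>) i} =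
      {f -` V | V. V \<in> \<V>}"
    by blast
  ultimately show ?thesis by (simp only:)
qed

lemma local_basis_proj_limit:
  assumes system: "projective_system I le Xs T G f"
    and basis: "\<And>i. i \<in> I \<Longrightarrow> local_basis (T i) (x i) (\<V> i)"
    and x: "x \<in> proj_limit I le Xs f"
  shows "local_basis (initial_topology (proj_limit I le Xs f) I (\<lambda>i x. x i) T) x
           {(\<lambda>x. x i) -` V \<inter> proj_limit I le Xs f | i V. i \<in> I \<and> V \<in> \<V> i}"
proof -
  have directed: "directed_preorder I le"
    and topspace: "\<And>i. i \<in> I \<Longrightarrow> topspace (T i) = Xs i"
    and transition_continuous: "\<And>i k. i \<in> I \<Longrightarrow> k \<in> I \<Longrightarrow> le i k \<Longrightarrow>
           continuous_map (T k) (T i) (f i k)"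
    using system unfolding projective_system_def locally_measurable_vs_def vector_space_topology_def
    by auto
  have "\<exists>k\<in>I. \<exists>g h. continuous_map (T k) (T i) g \<and> continuous_map (T k) (T j) h \<and>
          (\<forall>y\<in>proj_limit I le Xs f. y i = g (y k) \<and> y j = h (y k))"
    if "i \<in> I" "j \<in> I" for i j
  proof -
    obtain k where "k \<in> I" "le i k" "le j k"
      using directed \<open>i \<in> I\<close> \<open>j \<in> I\<close> unfolding directed_preorder_def by blast
    then show ?thesis
      using that transition_continuous unfolding proj_limit_def
      by (intro bexI[of _ k] exI[of _ "f i k"] exI[of _ "f j k"]) auto
  qed
  moreover have "I \<noteq> {}"
    using directed unfolding directed_preorder_def by blast
  ultimately show ?thesis
    using x basis topspace proj_limit_component[of _ I le Xs f]
    by (intro local_basis_of_cylinders topspace_initial_topology openin_initial_topology_cylinder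
        initial_topology_directed_cylinder_inside) auto
qed

theorem proposition3p1:
  shows
  "\<comment> \<open>(a) inverse image\<close>
   (\<forall>(f1 :: 'a::real_vector \<Rightarrow> 'c::real_vector) T1 G1 \<V>.
      locally_measurable_vs UNIV T1 G1 \<and> linear f1 \<and>
      (\<forall>y. local_basis T1 y (\<V> y) \<and> \<V> y \<subseteq> G1) \<longrightarrow>
      (let \<tau> = pullback_topology UNIV f1 T1;
           \<F> = sigma_sets UNIV {f1 -` A | A. A \<in> G1}
       in (\<forall>x. local_basis \<tau> x {f1 -` V | V. V \<in> \<V> (f1 x)}) \<and>
          (\<forall>x. \<exists>\<W>. local_basis \<tau> x \<W> \<and> \<W> \<subseteq> \<F>)))
   \<and>
   \<comment> \<open>(b) projective limit\<close>
   (\<forall>(I :: 'i set) le (Xs :: 'i \<Rightarrow> 'b::real_vector set) T G f \<V>.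
      projective_system I le Xs T G f \<and>
      (\<forall>i\<in>I. \<forall>y\<in>Xs i. local_basis (T i) y (\<V> i y) \<and> \<V> i y \<subseteq> G i) \<longrightarrow>
      (let X = proj_limit I le Xs f;
           \<tau> = initial_topology X I (\<lambda>i x. x i) T;
           \<F> = initial_sigma X I (\<lambda>i x. x i) G
       in (\<forall>x\<in>X. local_basis \<tau> x {(\<lambda>x. x i) -` V \<inter> X | i V. i \<in> I \<and> V \<in> \<V> i (x i)}) \<and>
          (\<forall>x\<in>X. \<exists>\<W>. local_basis \<tau> x \<W> \<and> \<W> \<subseteq> \<F>)))"
proof (intro conjI allI impI, unfold Let_def)
  fix f1 :: "'a \<Rightarrow> 'c" and T1 :: "'c topology" and G1 :: "'c set set" and \<V> :: "'c \<Rightarrow> 'c set set"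
  assume assms: "locally_measurable_vs UNIV T1 G1 \<and> linear f1 \<and>
    (\<forall>y. local_basis T1 y (\<V> y) \<and> \<V> y \<subseteq> G1)"
  then have "topspace T1 = UNIV"
    unfolding locally_measurable_vs_def vector_space_topology_def by blast
  then have "local_basis (pullback_topology UNIV f1 T1) x {f1 -` V | V. V \<in> \<V> (f1 x)}" for x
    using assms by (intro local_basis_pullback) auto
  moreover have "{f1 -` V | V. V \<in> \<V> (f1 x)} \<subseteq> sigma_sets UNIV {f1 -` A | A. A \<in> G1}" for x
    using assms by (blast intro: sigma_sets.Basic)
  ultimately show "(\<forall>x. local_basis (pullback_topology UNIV f1 T1) x {f1 -` V | V. V \<in> \<V> (f1 x)}) \<and>
      (\<forall>x. \<exists>\<W>. local_basis (pullback_topology UNIV f1 T1) x \<W> \<and>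
         \<W> \<subseteq> sigma_sets UNIV {f1 -` A | A. A \<in> G1})"
    by blast
next
  fix I :: "'i set" and le and Xs :: "'i \<Rightarrow> 'b set" and T G f and \<V> :: "'i \<Rightarrow> 'b \<Rightarrow> 'b set set"
  assume assms: "projective_system I le Xs T G f \<and>
      (\<forall>i\<in>I. \<forall>y\<in>Xs i. local_basis (T i) y (\<V> i y) \<and> \<V> i y \<subseteq> G i)"
  let ?X = "proj_limit I le Xs f"
  have "local_basis (initial_topology ?X I (\<lambda>i x. x i) T) x
      {(\<lambda>x. x i) -` V \<inter> ?X | i V. i \<in> I \<and> V \<in> \<V> i (x i)}" if "x \<in> ?X" for x
    using assms that proj_limit_component[OF that]
    by (intro local_basis_proj_limit[where \<V> = "\<lambda>i. \<V> i (x i)"]) auto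
  moreover have "{(\<lambda>x. x i) -` V \<inter> ?X | i V. i \<in> I \<and> V \<in> \<V> i (x i)}
      \<subseteq> initial_sigma ?X I (\<lambda>i x. x i) G" if "x \<in> ?X" for x
    unfolding initial_sigma_def
    using assms proj_limit_component[OF that] by (blast intro: sigma_sets.Basic)
  ultimately show "(\<forall>x\<in>?X. local_basis (initial_topology ?X I (\<lambda>i x. x i) T) x
          {(\<lambda>x. x i) -` V \<inter> ?X | i V. i \<in> I \<and> V \<in> \<V> i (x i)}) \<and>
      (\<forall>x\<in>?X. \<exists>\<W>. local_basis (initial_topology ?X I (\<lambda>i x. x i) T) x \<W> \<and>
         \<W> \<subseteq> initial_sigma ?X I (\<lambda>i x. x i) G)"
    by blast
qed

end
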